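(* Fix $c\in\mathbb{N}_0$ and let $A=\mathbb{K}[x_ix_j: i,j\in\mathbb{N},\ i\le j\le i+c]\subseteq R=\mathbb{K}[x_i: i\in\mathbb{N}]$. Then the set of string presentations of the monomials of $A$ is $\{x_{i_1}x_{i_2}\cdots x_{i_{2d-1}}x_{i_{2d}}: d\in\mathbb{N}_0,\ i_1\le i_2\le\cdots\le i_{2d},\ i_{2k}-i_{2k-1}\le c \text{ for } 1\le k\le d\}.$
   Context: $\mathbb{K}$ is a field. The string presentation of a monomial of $R$ is the unique word in the noncommuting letters $x_1,x_2,\dots$ representing it in which the indices appear in nondecreasing order from left to right (e.g. $x_1x_2\cdot x_1x_3$ has string presentation $x_1x_1x_2x_3$). *)

theory Defs
  imports Main "HOL-Library.Poly_Mapping"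
begin

(* Polynomials over 'k in the variables x_i (i :: nat) are represented as
  (nat -> nat) -> k : a monomial is an exponent vector m,
  and a polynomial maps monomials to coefficients. The paper's ring R only uses
  the variables x_i with i \<ge> 1.*)

type_synonym monom = "nat \<Rightarrow>\<^sub>0 nat"
type_synonym 'k mpoly = "(nat \<Rightarrow>\<^sub>0 nat) \<Rightarrow>\<^sub>0 'k"

definition monom_poly :: "monom \<Rightarrow> 'k::field mpoly" where
  "monom_poly m = Poly_Mapping.single m 1"

definition var :: "nat \<Rightarrow> 'k::field mpoly" where
  "var i = monom_poly (Poly_Mapping.single i 1)"

(* A = K[x_i x_j : 1 \<le> i \<le> j \<le> i + c], the K-subalgebra of R generated by these
  products: the smallest set containing the constants and the generators and closed
  under addition and multiplication (scalar multiples are products with constants).*)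
inductive_set subalg_A :: "nat \<Rightarrow> ('k::field) mpoly set" for c :: nat where
  const: "Poly_Mapping.single 0 a \<in> subalg_A c"
| gen: "1 \<le> i \<Longrightarrow> i \<le> j \<Longrightarrow> j \<le> i + c \<Longrightarrow> var i * var j \<in> subalg_A c"
| add: "p \<in> subalg_A c \<Longrightarrow> q \<in> subalg_A c \<Longrightarrow> p + q \<in> subalg_A c"
| mult: "p \<in> subalg_A c \<Longrightarrow> q \<in> subalg_A c \<Longrightarrow> p * q \<in> subalg_A c"

definition monomials_A :: "'k::field itself \<Rightarrow> nat \<Rightarrow> monom set" where
  "monomials_A _ c = {m. (\<forall>i\<in>Poly_Mapping.keys m. 1 \<le> i) \<and> (monom_poly m :: 'k mpoly) \<in> subalg_A c}"

definition string_pres :: "monom \<Rightarrow> nat list" where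
  "string_pres m = (THE xs. sorted xs \<and> (\<forall>i. count_list xs i = Poly_Mapping.lookup m i))"

end

theory Submission
  imports Defs "HOL-Library.Multiset"
begin

(* A monomial lies in A iff its multiset of indices splits into pairs {i, j} with |i - j| \<le> c,
  since A is spanned by products of its generators. For a sorted word such a splitting exists
  iff the letters in positions 2k - 1 and 2k can be paired: if the least letter a is paired
  with b while the next letter a' is paired with v, then a \<le> a' \<le> b, v together with
  b \<le> a + c and v \<le> a' + c allows re-pairing a with a' and b with v. *)

inductive pairable :: "nat \<Rightarrow> nat multiset \<Rightarrow> bool" for c :: nat where
  empty: "pairable c {#}"
| pair: "i \<le> j + c \<Longrightarrow> j \<le> i + c \<Longrightarrow> pairable c M \<Longrightarrow> pairable c (add_mset i (add_mset j M))"

lemma pairable_union: "pairable c M \<Longrightarrow> pairable c N \<Longrightarrow> pairable c (M + N)"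
  by (induction M rule: pairable.induct) (auto intro: pairable.intros)

lemma not_pairable_singleton: "\<not> pairable c {#x#}"
  by (auto elim: pairable.cases)

lemma pairable_obtain_partner:
  assumes "pairable c M" and "x \<in># M"
  obtains y M' where "M = add_mset x (add_mset y M')" "x \<le> y + c" "y \<le> x + c" "pairable c M'"
  using assms
proof (induction M arbitrary: thesis rule: pairable.induct)
  case empty
  then show ?case by simp
next
  case (pair i j M)
  consider "x = i" | "x = j" | "x \<in># M"
    using pair.prems(2) by auto
  then show ?case
  proof cases
    case 1
    then show ?thesis using pair by blast
  next
    case 2
    then show ?thesis using pair by (metis add_mset_commute)
  next
    case 3
    obtain y M' where "M = add_mset x (add_mset y M')" "x \<le> y + c" "y \<le> x + c" "pairable c M'"
      using pair.IH 3 by blast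
    then show ?thesis
      using pair.prems(1)[of y "add_mset i (add_mset j M')"] pair.hyps(1,2)
      by (simp add: add_mset_commute pairable.pair)
  qed
qed

lemma pairable_pair_least:
  assumes pairable: "pairable c (add_mset a (add_mset a' M))"
    and "a \<le> a'" and least: "\<forall>x\<in>#M. a' \<le> x"
  shows "a' \<le> a + c" and "pairable c M"
proof -
  obtain b N where N: "add_mset a' M = add_mset b N" and "b \<le> a + c" and "pairable c N"
    by (rule pairable_obtain_partner[OF pairable, of a]) auto
  have "a' \<le> b"
    using N least by (metis insert_iff le_refl set_mset_add_mset_insert)
  then show "a' \<le> a + c"
    using \<open>b \<le> a + c\<close> by simp
  show "pairable c M"
  proof (cases "a' = b")
    case True
    then show ?thesis using N \<open>pairable c N\<close> by simp
  next
    case False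
    then have "a' \<in># N"
      using N by (metis insert_noteq_member)
    then obtain v N' where N': "N = add_mset a' (add_mset v N')" "v \<le> a' + c" "pairable c N'"
      using pairable_obtain_partner[OF \<open>pairable c N\<close>] by blast
    then have M: "M = add_mset b (add_mset v N')"
      using N by (simp add: add_mset_commute)
    then have "a' \<le> v"
      using least by simp
    then have "b \<le> v + c" "v \<le> b + c"
      using \<open>b \<le> a + c\<close> \<open>a \<le> a'\<close> \<open>a' \<le> b\<close> \<open>v \<le> a' + c\<close> by linarith+
    then show ?thesis
      unfolding M using N'(3) by (rule pairable.pair)
  qed
qed

fun adjacent_pairs_within :: "nat \<Rightarrow> nat list \<Rightarrow> bool" where
  "adjacent_pairs_within c [] = True"
| "adjacent_pairs_within c [x] = False"
| "adjacent_pairs_within c (x # y # xs) = (y - x \<le> c \<and> adjacent_pairs_within c xs)"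

lemma adjacent_pairs_within_iff_nth:
  "adjacent_pairs_within c xs \<longleftrightarrow>
    (\<exists>d. length xs = 2 * d \<and> (\<forall>k<d. xs ! (2 * k + 1) - xs ! (2 * k) \<le> c))"
proof (induction c xs rule: adjacent_pairs_within.induct)
  case (3 c x y xs)
  have "(\<exists>d. length (x # y # xs) = 2 * d \<and> P d) \<longleftrightarrow> (\<exists>d. length xs = 2 * d \<and> P (Suc d))" for P
  proof
    assume "\<exists>d. length (x # y # xs) = 2 * d \<and> P d"
    then obtain d where "length (x # y # xs) = 2 * d" "P d"
      by blast
    then show "\<exists>d. length xs = 2 * d \<and> P (Suc d)"
      by (cases d) auto
  next
    assume "\<exists>d. length xs = 2 * d \<and> P (Suc d)"
    then obtain d where "length xs = 2 * d" "P (Suc d)"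
      by blast
    then show "\<exists>d. length (x # y # xs) = 2 * d \<and> P d"
      by (intro exI[of _ "Suc d"]) simp
  qed
  then show ?case
    using 3 by (simp add: All_less_Suc2) blast
qed auto

lemma sorted_adjacent_pairs_within_iff_pairable:
  "sorted xs \<Longrightarrow> adjacent_pairs_within c xs \<longleftrightarrow> pairable c (mset xs)"
proof (induction c xs rule: adjacent_pairs_within.induct)
  case (2 c x)
  then show ?case using not_pairable_singleton by simp
next
  case (3 c x y xs)
  then have "x \<le> y" "\<forall>z\<in>#mset xs. y \<le> z" "sorted xs"
    by auto
  then show ?case
    using 3 pairable_pair_least[of c x y "mset xs"]
    by (auto intro: pairable.pair)
qed (simp add: pairable.empty)

lemma image_sorted_list_of_multiset:
  "sorted_list_of_multiset ` {M. P M} = {xs. sorted xs \<and> P (mset xs)}"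
proof
  show "{xs. sorted xs \<and> P (mset xs)} \<subseteq> sorted_list_of_multiset ` {M. P M}"
    by (auto intro!: image_eqI simp: sorted_sort_id)
qed auto

definition monom_of_mset :: "'a multiset \<Rightarrow> 'a \<Rightarrow>\<^sub>0 nat" where
  "monom_of_mset M = Abs_poly_mapping (count M)"

lemma lookup_monom_of_mset [simp]: "Poly_Mapping.lookup (monom_of_mset M) = count M"
  by (simp add: monom_of_mset_def count_eq_zero_iff)

lemma keys_monom_of_mset [simp]: "Poly_Mapping.keys (monom_of_mset M) = set_mset M"
  by (auto simp: in_keys_iff)

lemma monom_of_mset_empty [simp]: "monom_of_mset {#} = 0"
  by (rule poly_mapping_eqI) simp

lemma monom_of_mset_union: "monom_of_mset (M + N) = monom_of_mset M + monom_of_mset N"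
  by (rule poly_mapping_eqI) (simp add: lookup_add)

lemma monom_of_mset_add_mset:
  "monom_of_mset (add_mset i M) = Poly_Mapping.single i 1 + monom_of_mset M"
  by (rule poly_mapping_eqI) (simp add: lookup_add lookup_single when_def)

lemma string_pres_monom_of_mset: "string_pres (monom_of_mset M) = sorted_list_of_multiset M"
  unfolding string_pres_def
proof (rule the_equality)
  show "sorted (sorted_list_of_multiset M) \<and>
      (\<forall>i. count_list (sorted_list_of_multiset M) i = Poly_Mapping.lookup (monom_of_mset M) i)"
    by (simp add: count_mset[symmetric])
next
  fix xs
  assume "sorted xs \<and> (\<forall>i. count_list xs i = Poly_Mapping.lookup (monom_of_mset M) i)"
  then have "sorted xs" "mset xs = M"
    by (simp_all add: multiset_eq_iff count_mset[symmetric])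
  then show "xs = sorted_list_of_multiset M"
    by (auto simp: sorted_sort_id)
qed

lemma monom_poly_add: "(monom_poly (m + n) :: 'k::field mpoly) = monom_poly m * monom_poly n"
  by (simp add: monom_poly_def mult_single)

lemma var_mult_var: "(var i * var j :: 'k::field mpoly) = monom_poly (monom_of_mset {#i, j#})"
  by (simp add: var_def monom_poly_add[symmetric] monom_of_mset_add_mset)

lemma keys_subalg_A_pairable:
  assumes "(p :: 'k::field mpoly) \<in> subalg_A c" and "m \<in> Poly_Mapping.keys p"
  shows "\<exists>M. pairable c M \<and> m = monom_of_mset M"
  using assms
proof (induction arbitrary: m rule: subalg_A.induct)
  case (const a)
  then have "m = monom_of_mset {#}"
    by (simp split: if_splits)
  then show ?case
    using pairable.empty by blast
next
  case (gen i j)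
  then have "pairable c {#i, j#}"
    by (auto intro: pairable.intros)
  moreover have "m = monom_of_mset {#i, j#}"
    using gen.prems by (simp add: var_mult_var monom_poly_def split: if_splits)
  ultimately show ?case
    by blast
next
  case (add p q)
  then show ?case
    using keys_add[of p q] by blast
next
  case (mult p q)
  obtain a b where "m = a + b" "a \<in> Poly_Mapping.keys p" "b \<in> Poly_Mapping.keys q"
    using mult.prems keys_mult[of p q] by blast
  then obtain A B where "pairable c A" "a = monom_of_mset A" "pairable c B" "b = monom_of_mset B"
    using mult.IH by blast
  then show ?case
    using \<open>m = a + b\<close> by (metis pairable_union monom_of_mset_union)
qed

lemma monom_poly_in_subalg_A:
  "pairable c M \<Longrightarrow> \<forall>i\<in>#M. 1 \<le> i \<Longrightarrow>
    (monom_poly (monom_of_mset M) :: 'k::field mpoly) \<in> subalg_A c"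
proof (induction M rule: pairable.induct)
  case empty
  then show ?case
    using subalg_A.const[of 1] by (simp add: monom_poly_def)
next
  case (pair i j M)
  have "(var (min i j) * var (max i j) :: 'k mpoly) \<in> subalg_A c"
    using pair by (intro subalg_A.gen) auto
  then have "(monom_poly (monom_of_mset {#i, j#}) :: 'k mpoly) \<in> subalg_A c"
    by (cases "i \<le> j") (simp_all add: var_mult_var add_mset_commute)
  then show ?case
    using pair
    by (simp add: monom_of_mset_add_mset add.assoc[symmetric] monom_poly_add subalg_A.mult)
qed

lemma monomials_A_eq:
  "monomials_A TYPE('k::field) c = monom_of_mset ` {M. pairable c M \<and> (\<forall>i\<in>#M. 1 \<le> i)}"
proof
  show "monomials_A TYPE('k) c \<subseteq> monom_of_mset ` {M. pairable c M \<and> (\<forall>i\<in>#M. 1 \<le> i)}"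
  proof
    fix m
    assume m: "m \<in> monomials_A TYPE('k) c"
    then have "m \<in> Poly_Mapping.keys (monom_poly m :: 'k mpoly)"
      and "(monom_poly m :: 'k mpoly) \<in> subalg_A c"
      by (simp_all add: monomials_A_def monom_poly_def)
    then obtain M where "pairable c M" "m = monom_of_mset M"
      using keys_subalg_A_pairable by blast
    with m show "m \<in> monom_of_mset ` {M. pairable c M \<and> (\<forall>i\<in>#M. 1 \<le> i)}"
      by (auto simp: monomials_A_def)
  qed
qed (auto simp: monomials_A_def monom_poly_in_subalg_A)

theorem lemma5p1:
  fixes c :: nat
  shows "string_pres ` monomials_A TYPE('k::field) c =
    {xs. \<exists>d. length xs = 2 * d \<and> sorted xs \<and> (\<forall>i\<in>set xs. 1 \<le> i) \<and>
           (\<forall>k<d. xs ! (2 * k + 1) - xs ! (2 * k) \<le> c)}"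
proof -
  have "string_pres ` monomials_A TYPE('k) c =
      sorted_list_of_multiset ` {M. pairable c M \<and> (\<forall>i\<in>#M. 1 \<le> i)}"
    by (simp add: monomials_A_eq image_image string_pres_monom_of_mset)
  also have "\<dots> = {xs. sorted xs \<and> pairable c (mset xs) \<and> (\<forall>i\<in>set xs. 1 \<le> i)}"
    by (simp add: image_sorted_list_of_multiset)
  also have "\<dots> = {xs. sorted xs \<and> adjacent_pairs_within c xs \<and> (\<forall>i\<in>set xs. 1 \<le> i)}"
    using sorted_adjacent_pairs_within_iff_pairable by blast
  finally show ?thesis
    by (auto simp: adjacent_pairs_within_iff_nth)
qed

end
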